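(* Let $\Gamma$ be an extended Dynkin graph with vertex set $I$ and standard integral generalized Cartan matrix $C$, let $W$ be the associated affine Weyl group, and let $v\in\mathbb{R}^I$ be a configuration with $\delta\cdot v=0$ (the case in which the numbers game loops). Then for every $g\in W$ there is a finite sequence of legal moves of the numbers game taking $v$ to $g v$. In particular, from any configuration reached from $v$ by playing the numbers game, one can always return to the initial configuration $v$ by playing the numbers game.
   Context: $\Gamma$ is the Dynkin diagram of an affine Weyl group (types $\widetilde{A_n},\widetilde{B_n},\widetilde{C_n},\widetilde{D_n},\widetilde{E_6},\widetilde{E_7},\widetilde{E_8},\widetilde{F_4},\widetilde{G_2}$), with vertex set $I$ and standard integral generalized Cartan matrix $C=(c_{ij})_{i,j\in I}$ ($c_{ii}=2$, $c_{ij}\le 0$ for $i\neq j$, $c_{ij}=0$ iff $i,j$ are not adjacent). Configurations are vectors $v\in\mathbb{R}^I$ (entries are called amplitudes). For $i\in I$ let $f_i:\mathbb{R}^I\to\mathbb{R}^I$ be the linear map $f_i(v)_i=-v_i$, $f_i(v)_j=v_j-c_{ij}v_i$ if $j$ is adjacent to $i$, and $f_i(v)_j=v_j$ otherwise; the simple reflection $s_i$ of $W$ acts on $\mathbb{R}^I$ by $f_i$. A legal move of the numbers game (firing vertex $i$) is allowed from $v$ only if $v_i<0$, and replaces $v$ by $f_i(v)$. Let $\alpha^{(i)}$, $i\in I$, be the standard basis of $\mathbb{Z}^I$ (simple roots), with Cartan form $\langle\alpha^{(i)},\alpha^{(j)}\rangle=c_{ij}$; $W$ acts on $\mathbb{Z}^I$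 by $s_i\alpha=\alpha-\langle\alpha,\alpha^{(i)}\rangle\alpha^{(i)}$, and the roots $\Delta$ are the $W$-orbit of the simple roots. A vertex $i$ is extending if $\Gamma\setminus\{i\}$ is a Dynkin graph whose extended Dynkin graph is $\Gamma$ with $i$ as extending vertex. $\delta\in\mathbb{Z}_{\ge0}^I$ is the unique vector with $\delta_i=1$ at all extending vertices and $\langle\delta,\alpha\rangle=0$ for all $\alpha\in\Delta$; $\delta\cdot v=\sum_i\delta_iv_i$ is the usual dot product. *)

theory Defs
  imports Complex_Main
begin

text \<open>The index n of the classical types is the rank of the
underlying finite Dynkin diagram; the vertex set is {0..n}, vertex 0 being the
(standard) extending vertex.\<close>

datatype affine_type = TA nat | TB nat | TC nat | TD nat | TE6 | TE7 | TE8 | TF4 | TG2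

fun valid_type :: "affine_type \<Rightarrow> bool" where
  "valid_type (TA n) = (n \<ge> 1)"
| "valid_type (TB n) = (n \<ge> 3)"
| "valid_type (TC n) = (n \<ge> 2)"
| "valid_type (TD n) = (n \<ge> 4)"
| "valid_type _ = True"

fun rank :: "affine_type \<Rightarrow> nat" where
  "rank (TA n) = n"
| "rank (TB n) = n"
| "rank (TC n) = n"
| "rank (TD n) = n"
| "rank TE6 = 6"
| "rank TE7 = 7"
| "rank TE8 = 8"
| "rank TF4 = 4"
| "rank TG2 = 2"

definition vertices :: "affine_type \<Rightarrow> nat set" where
  "vertices T = {0..rank T}"

definition simple_edge :: "(nat \<times> nat) set \<Rightarrow> nat \<Rightarrow> nat \<Rightarrow> int" where
  "simple_edge E i j = (if (i, j) \<in> E \<or> (j, i) \<in> E then -1 else 0)"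

text \<open>Kac's generalized Cartan matrix a_ij = <alpha_i^vee, alpha_j> of the untwisted
affine algebra X_n^(1) (Kac, Infinite dimensional Lie algebras, Table Aff 1),
off-diagonal part, for distinct vertices i, j.\<close>
fun kac_off :: "affine_type \<Rightarrow> nat \<Rightarrow> nat \<Rightarrow> int" where
  "kac_off (TA n) i j =
     (if n = 1 then -2
      else if j = Suc i mod (n + 1) \<or> i = Suc j mod (n + 1) then -1 else 0)"
| "kac_off (TB n) i j =
     (if i = n \<and> j = n - 1 then -2
      else if i = n - 1 \<and> j = n then -1
      else simple_edge ({(0, 2)} \<union> {(k, k + 1) | k. 1 \<le> k \<and> k + 2 \<le> n}) i j)"
| "kac_off (TC n) i j =
     (if i = 1 \<and> j = 0 then -2
      else if i = n - 1 \<and> j = n then -2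
      else simple_edge {(k, k + 1) | k. k + 1 \<le> n} i j)"
| "kac_off (TD n) i j =
     simple_edge ({(0, 2), (n - 2, n)} \<union> {(k, k + 1) | k. 1 \<le> k \<and> k + 2 \<le> n}) i j"
| "kac_off TE6 i j = simple_edge {(0, 2), (2, 4), (1, 3), (3, 4), (4, 5), (5, 6)} i j"
| "kac_off TE7 i j = simple_edge {(0, 1), (2, 4), (1, 3), (3, 4), (4, 5), (5, 6), (6, 7)} i j"
| "kac_off TE8 i j =
     simple_edge {(8, 0), (2, 4), (1, 3), (3, 4), (4, 5), (5, 6), (6, 7), (7, 8)} i j"
| "kac_off TF4 i j =
     (if i = 3 \<and> j = 2 then -2
      else if i = 2 \<and> j = 3 then -1
      else simple_edge {(0, 1), (1, 2), (3, 4)} i j)"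
| "kac_off TG2 i j =
     (if i = 1 \<and> j = 2 then -3
      else if i = 2 \<and> j = 1 then -1
      else simple_edge {(0, 2)} i j)"

definition kac :: "affine_type \<Rightarrow> nat \<Rightarrow> nat \<Rightarrow> int" where
  "kac T i j =
     (if i \<notin> vertices T \<or> j \<notin> vertices T then 0
      else if i = j then 2 else kac_off T i j)"

text \<open>The standard integral generalized Cartan matrix C = (c_ij) used in the paper,
with Cartan form <alpha^(i), alpha^(j)> = c_ij and
s_i alpha = alpha - <alpha, alpha^(i)> alpha^(i); so that s_i alpha^(j) = alpha^(j) - c_ji alpha^(i)
agrees with Kac's s_i alpha_j = alpha_j - a_ij alpha_i, i.e. c_ij = a_ji.\<close>
definition cartan :: "affine_type \<Rightarrow> nat \<Rightarrow> nat \<Rightarrow> int" where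
  "cartan T i j = kac T j i"

text \<open>Configurations are real vectors indexed by I (represented as functions on nat;
coordinates outside I are never touched).  The linear map f_i.\<close>
definition fire :: "affine_type \<Rightarrow> nat \<Rightarrow> (nat \<Rightarrow> real) \<Rightarrow> (nat \<Rightarrow> real)" where
  "fire T i v = (\<lambda>j. if j = i then - v i
                     else if j \<in> vertices T then v j - of_int (cartan T i j) * v i
                     else v j)"

definition legal_move :: "affine_type \<Rightarrow> (nat \<Rightarrow> real) \<Rightarrow> (nat \<Rightarrow> real) \<Rightarrow> bool" where
  "legal_move T v w \<longleftrightarrow> (\<exists>i \<in> vertices T. v i < 0 \<and> w = fire T i v)"

abbreviation game_reach :: "affine_type \<Rightarrow> (nat \<Rightarrow> real) \<Rightarrow> (nat \<Rightarrow> real) \<Rightarrow> bool" where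
  "game_reach T \<equiv> (legal_move T)\<^sup>*\<^sup>*"

text \<open>Action of the Weyl group element represented by the word s_{i_1} ... s_{i_k}.\<close>
definition weyl_act :: "affine_type \<Rightarrow> nat list \<Rightarrow> (nat \<Rightarrow> real) \<Rightarrow> (nat \<Rightarrow> real)" where
  "weyl_act T g v = foldr (fire T) g v"

definition simple_root :: "nat \<Rightarrow> nat \<Rightarrow> int" where
  "simple_root i = (\<lambda>j. if j = i then 1 else 0)"

definition cartan_form :: "affine_type \<Rightarrow> (nat \<Rightarrow> int) \<Rightarrow> (nat \<Rightarrow> int) \<Rightarrow> int" where
  "cartan_form T x y = (\<Sum>i \<in> vertices T. \<Sum>j \<in> vertices T. x i * cartan T i j * y j)"

definition refl :: "affine_type \<Rightarrow> nat \<Rightarrow> (nat \<Rightarrow> int) \<Rightarrow> (nat \<Rightarrow> int)" where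
  "refl T i a = (\<lambda>j. a j - cartan_form T a (simple_root i) * simple_root i j)"

inductive_set roots :: "affine_type \<Rightarrow> (nat \<Rightarrow> int) set" for T where
  simple: "i \<in> vertices T \<Longrightarrow> simple_root i \<in> roots T"
| reflect: "a \<in> roots T \<Longrightarrow> i \<in> vertices T \<Longrightarrow> refl T i a \<in> roots T"

definition diagram_aut :: "affine_type \<Rightarrow> (nat \<Rightarrow> nat) \<Rightarrow> bool" where
  "diagram_aut T \<sigma> \<longleftrightarrow> bij_betw \<sigma> (vertices T) (vertices T) \<and>
     (\<forall>i \<in> vertices T. \<forall>j \<in> vertices T. cartan T (\<sigma> i) (\<sigma> j) = cartan T i j)"

text \<open>Extending vertices: images of the standard extending vertex 0 under diagram
automorphisms (exactly the vertices i such that Gamma minus i is a Dynkin graph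
whose extension is Gamma with i as extending vertex).\<close>
definition extending :: "affine_type \<Rightarrow> nat set" where
  "extending T = {\<sigma> 0 | \<sigma>. diagram_aut T \<sigma>}"

definition delta :: "affine_type \<Rightarrow> nat \<Rightarrow> int" where
  "delta T = (THE d. (\<forall>i \<in> vertices T. 0 \<le> d i) \<and> (\<forall>i. i \<notin> vertices T \<longrightarrow> d i = 0)
                    \<and> (\<forall>i \<in> extending T. d i = 1)
                    \<and> (\<forall>a \<in> roots T. cartan_form T a d = 0))"

definition delta_dot :: "affine_type \<Rightarrow> (nat \<Rightarrow> real) \<Rightarrow> real" where
  "delta_dot T v = (\<Sum>i \<in> vertices T. of_int (delta T i) * v i)"

end

theory Submission
  imports Defs "Jordan_Normal_Form.Determinant"
begin

text \<open>Write a configuration v as the vector of Cartan pairings of a point x of the root space;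
  \<open>\<delta> \<cdot> v = 0\<close> is exactly the condition for such an x to exist, and firing vertex i
  reflects x in the i-th simple root. For an affine diagram the symmetrized Cartan form is
  positive semidefinite with a one-dimensional radical, so it bounds the pairings of the
  reflected simple roots; these are integers, hence the W-orbit of v is finite.
  On the finite set S of configurations reachable from v, orthogonality to \<open>\<delta>\<close> makes the
  \<open>\<delta>\<close>-weighted sums of the positive and of the negative amplitudes agree. Firing a negative
  amplitude yields a positive one in S, injectively, so every positive amplitude arises this
  way and S is closed under all simple reflections, i.e.\ S = W v. Returning to v is the same
  statement for the reached configuration, which is again orthogonal to \<open>\<delta>\<close>.\<close>

lemma finite_Ints_abs_le: "finite {z :: real. z \<in> \<int> \<and> \<bar>z\<bar> \<le> M}"
proof (rule finite_subset)
  show "{z :: real. z \<in> \<int> \<and> \<bar>z\<bar> \<le> M} \<subseteq> real_of_int ` {-\<lceil>M\<rceil>..\<lceil>M\<rceil>}"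
  proof
    fix z :: real assume "z \<in> {z. z \<in> \<int> \<and> \<bar>z\<bar> \<le> M}"
    then obtain m where z: "z = of_int m" and "\<bar>of_int m\<bar> \<le> M" by (auto elim: Ints_cases)
    then have "m \<in> {-\<lceil>M\<rceil>..\<lceil>M\<rceil>}" by (auto simp: abs_le_iff) linarith+
    then show "z \<in> real_of_int ` {-\<lceil>M\<rceil>..\<lceil>M\<rceil>}" using z by blast
  qed
qed simp

lemma subset_eq_if_sum_eq:
  fixes f :: "'a \<Rightarrow> 'b::ordered_cancel_comm_monoid_add"
  assumes "finite B" and "A \<subseteq> B" and "sum f A = sum f B" and "\<And>x. x \<in> B \<Longrightarrow> 0 < f x"
  shows "A = B"
proof (rule ccontr)
  assume "A \<noteq> B"
  with assms(2) obtain b where "b \<in> B - A" by blast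
  with assms have "sum f A < sum f B" by (intro sum_strict_mono2) (auto intro: less_imp_le)
  with assms(3) show False by simp
qed

lemma sum_eq_0_by_support:
  "finite A \<Longrightarrow> B \<subseteq> A \<Longrightarrow> (\<And>j. j \<in> A \<Longrightarrow> j \<notin> B \<Longrightarrow> f j = 0) \<Longrightarrow> sum f B = 0 \<Longrightarrow> sum f A = 0"
  by (subst sum.mono_neutral_right[of A B]) auto

lemma injective_square_system_solvable:
  fixes M :: "nat \<Rightarrow> nat \<Rightarrow> real"
  assumes inj: "\<And>w. (\<And>r. r < m \<Longrightarrow> (\<Sum>s<m. M r s * w s) = 0) \<Longrightarrow> \<forall>s<m. w s = 0"
  shows "\<exists>w. \<forall>r<m. (\<Sum>s<m. M r s * w s) = b r"
proof -
  define A where "A = mat m m (\<lambda>(r, s). M r s)"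
  have A: "A \<in> carrier_mat m m" unfolding A_def by auto
  have mult_A: "(A *\<^sub>v w) $ r = (\<Sum>s<m. M r s * w $ s)" if "r < m" "w \<in> carrier_vec m" for w r
    using that unfolding A_def by (simp add: scalar_prod_def lessThan_atLeast0)
  have "det A \<noteq> 0"
  proof
    assume "det A = 0"
    then obtain w where w: "w \<in> carrier_vec m" "w \<noteq> 0\<^sub>v m" "A *\<^sub>v w = 0\<^sub>v m"
      using det_0_iff_vec_prod_zero_field[OF A] by blast
    have "\<forall>s<m. w $ s = 0"
      by (rule inj) (use w mult_A in \<open>metis index_zero_vec(1)\<close>)
    then have "w = 0\<^sub>v m" using w by (intro eq_vecI) auto
    with w show False by simp
  qed
  from det_non_zero_imp_unit[OF A this, of "()"]
  obtain B where B: "B \<in> carrier_mat m m" "A * B = 1\<^sub>m m"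
    unfolding Units_def ring_mat_def by auto
  have sol: "A *\<^sub>v (B *\<^sub>v vec m b) = vec m b"
    using assoc_mult_mat_vec[OF A B(1)] B(2) by simp
  show ?thesis
  proof (intro exI allI impI)
    fix r assume "r < m"
    then show "(\<Sum>s<m. M r s * (B *\<^sub>v vec m b) $ s) = b r"
      using sol mult_A[of r "B *\<^sub>v vec m b"] B(1) by simp
  qed
qed

section \<open>Firing and the Weyl group action\<close>

lemma finite_vertices [simp]: "finite (vertices T)"
  by (simp add: vertices_def)

lemma zero_in_vertices [simp]: "0 \<in> vertices T"
  by (simp add: vertices_def)

lemma vertices_upt: "vertices T = set [0..<Suc (rank T)]"
  by (simp add: vertices_def atLeastAtMost_upt)

lemma vertices_insert_Suc: "vertices T = insert 0 (Suc ` {..<rank T})"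
  by (simp add: vertices_def atLeast0AtMost lessThan_Suc_atMost[symmetric] lessThan_Suc_eq_insert_0)

lemma cartan_eq_0_outside: "i \<notin> vertices T \<or> j \<notin> vertices T \<Longrightarrow> cartan T i j = 0"
  by (auto simp: cartan_def kac_def)

lemma cartan_diag: "i \<in> vertices T \<Longrightarrow> cartan T i i = 2"
  by (simp add: cartan_def kac_def)

lemma cartan_offdiag_nonpos:
  assumes "i \<noteq> j"
  shows "cartan T i j \<le> 0"
proof -
  have "kac_off T j i \<le> 0"
    by (cases T) (auto simp: simple_edge_def)
  with assms show ?thesis
    by (simp add: cartan_def kac_def)
qed

lemma cartan_form_simple_root:
  assumes "k \<in> vertices T"
  shows "cartan_form T (simple_root k) y = (\<Sum>j\<in>vertices T. cartan T k j * y j)"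
proof -
  have "cartan_form T (simple_root k) y
      = (\<Sum>i\<in>vertices T. simple_root k i * (\<Sum>j\<in>vertices T. cartan T i j * y j))"
    by (simp add: cartan_form_def sum_distrib_left mult_ac)
  also have "\<dots> = (\<Sum>j\<in>vertices T. cartan T k j * y j)"
    using assms by (simp add: simple_root_def if_distrib[of "\<lambda>z. z * _"] cong: if_cong)
  finally show ?thesis .
qed

lemma zero_in_extending: "0 \<in> extending T"
  unfolding extending_def diagram_aut_def by (auto intro!: exI[of _ id])

lemma extending_subset_vertices: "extending T \<subseteq> vertices T"
  by (auto simp: extending_def diagram_aut_def bij_betw_def)

lemma fire_eq:
  "i \<in> vertices T \<Longrightarrow>
   fire T i v = (\<lambda>j. if j \<in> vertices T then v j - of_int (cartan T i j) * v i else v j)"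
  by (auto simp: fire_def cartan_diag)

lemma fire_same: "fire T i v i = - v i"
  by (simp add: fire_def)

lemma fire_outside: "i \<in> vertices T \<Longrightarrow> j \<notin> vertices T \<Longrightarrow> fire T i v j = v j"
  by (auto simp: fire_def)

lemma fire_fire: "i \<in> vertices T \<Longrightarrow> fire T i (fire T i v) = v"
  by (rule ext) (simp add: fire_eq cartan_diag algebra_simps)

lemma inj_on_fire_pair: "inj_on (\<lambda>z. (fire T (snd z) (fst z), snd z)) (UNIV \<times> vertices T)"
proof (rule inj_onI)
  fix y z assume "y \<in> UNIV \<times> vertices T" "(fire T (snd y) (fst y), snd y) = (fire T (snd z) (fst z), snd z)"
  then have "snd y = snd z" "snd y \<in> vertices T" "fire T (snd y) (fst y) = fire T (snd y) (fst z)"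
    by auto
  then have "fst y = fst z"
    using fire_fire[of "snd y" T "fst y"] fire_fire[of "snd y" T "fst z"] by simp
  with \<open>snd y = snd z\<close> show "y = z" by (simp add: prod_eq_iff)
qed

lemma weyl_act_Nil [simp]: "weyl_act T [] v = v"
  and weyl_act_Cons [simp]: "weyl_act T (i # g) v = fire T i (weyl_act T g v)"
  by (simp_all add: weyl_act_def)

lemma weyl_act_outside:
  "set g \<subseteq> vertices T \<Longrightarrow> j \<notin> vertices T \<Longrightarrow> weyl_act T g v j = v j"
  by (induction g) (simp_all add: fire_outside)

lemma weyl_act_rev: "set g \<subseteq> vertices T \<Longrightarrow> weyl_act T (rev g) (weyl_act T g v) = v"
  by (induction g arbitrary: v) (auto simp: weyl_act_def fire_fire)

lemma game_reach_imp_weyl_act: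
  assumes "game_reach T v w"
  obtains g where "set g \<subseteq> vertices T" and "w = weyl_act T g v"
proof -
  from assms have "\<exists>g. set g \<subseteq> vertices T \<and> w = weyl_act T g v"
  proof (induction rule: rtranclp_induct)
    case base
    show ?case by (intro exI[of _ "[]"]) simp
  next
    case (step u w)
    then obtain g where "set g \<subseteq> vertices T" "u = weyl_act T g v" by blast
    moreover from step.hyps(2) obtain i where "i \<in> vertices T" "w = fire T i u"
      by (auto simp: legal_move_def)
    ultimately show ?case by (intro exI[of _ "i # g"]) simp
  qed
  then show thesis using that by blast
qed

lemma connected_by_parent:
  fixes depth :: "nat \<Rightarrow> nat"
  assumes "i \<in> vertices T"
    and "\<And>i. i \<in> vertices T \<Longrightarrow> i \<noteq> 0 \<Longrightarrow>
           parent i \<in> vertices T \<and> cartan T (parent i) i \<noteq> 0 \<and> depth (parent i) < depth i"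
  shows "(\<lambda>x y. x \<in> vertices T \<and> y \<in> vertices T \<and> cartan T x y \<noteq> 0)\<^sup>*\<^sup>* 0 i"
  using assms(1)
proof (induction "depth i" arbitrary: i rule: less_induct)
  case less
  show ?case
  proof (cases "i = 0")
    case False
    with assms(2)[OF less.prems] less.hyps less.prems show ?thesis
      by (auto intro: rtranclp.rtrancl_into_rtrancl)
  qed simp
qed

section \<open>Cartan matrices of affine type\<close>

locale affine_gcm =
  fixes T :: affine_type and a :: "nat \<Rightarrow> int" and \<eta> :: "nat \<Rightarrow> real"
  assumes symmetrizer_pos: "\<And>i. i \<in> vertices T \<Longrightarrow> \<eta> i > 0"
    and symmetrizable: "\<And>i k. i \<in> vertices T \<Longrightarrow> k \<in> vertices T \<Longrightarrow>
                 \<eta> k * of_int (cartan T i k) = \<eta> i * of_int (cartan T k i)"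
    and marks_pos: "\<And>i. i \<in> vertices T \<Longrightarrow> a i > 0"
    and mark_zero: "a 0 = 1"
    and null_vector: "\<And>i. i \<in> vertices T \<Longrightarrow> (\<Sum>j\<in>vertices T. cartan T i j * a j) = 0"
    and connected: "\<And>i. i \<in> vertices T \<Longrightarrow>
       (\<lambda>x y. x \<in> vertices T \<and> y \<in> vertices T \<and> cartan T x y \<noteq> 0)\<^sup>*\<^sup>* 0 i"
begin

abbreviation "V \<equiv> vertices T"

definition C :: "nat \<Rightarrow> nat \<Rightarrow> real" where "C i j = of_int (cartan T i j)"
definition d :: "nat \<Rightarrow> real" where "d i = of_int (a i)"
definition p :: "nat \<Rightarrow> real" where "p i = d i / \<eta> i"

text \<open>\<open>config_of x\<close> is the configuration of the point \<open>\<Sum>i. x i \<alpha>\<^sub>i\<close> of the root space,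
  i.e.\ its Cartan pairings with the simple roots; \<open>qform\<close> is the Cartan form symmetrized by
  \<open>\<eta>\<close>.\<close>

definition config_of :: "(nat \<Rightarrow> real) \<Rightarrow> nat \<Rightarrow> real" where
  "config_of x k = (\<Sum>i\<in>V. x i * C i k)"

definition qform :: "(nat \<Rightarrow> real) \<Rightarrow> real" where
  "qform x = (\<Sum>k\<in>V. \<eta> k * x k * config_of x k)"

lemma d_pos: "i \<in> V \<Longrightarrow> d i > 0"
  using marks_pos by (simp add: d_def)

lemma p_pos: "i \<in> V \<Longrightarrow> p i > 0"
  using d_pos symmetrizer_pos by (simp add: p_def)

lemma C_symmetrizable: "i \<in> V \<Longrightarrow> k \<in> V \<Longrightarrow> \<eta> k * C i k = \<eta> i * C k i"
  using symmetrizable by (simp add: C_def)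

lemma C_diag: "i \<in> V \<Longrightarrow> C i i = 2"
  by (simp add: C_def cartan_diag)

lemma C_offdiag_nonpos: "i \<noteq> k \<Longrightarrow> C i k \<le> 0"
  by (simp add: C_def cartan_offdiag_nonpos)

lemma C_eq_0_outside: "i \<notin> V \<or> k \<notin> V \<Longrightarrow> C i k = 0"
  by (simp add: C_def cartan_eq_0_outside)

lemma C_Ints: "C i k \<in> \<int>"
  by (simp add: C_def)

lemma C_null_vector: "i \<in> V \<Longrightarrow> (\<Sum>j\<in>V. C i j * d j) = 0"
proof -
  assume "i \<in> V"
  have "(\<Sum>j\<in>V. C i j * d j) = of_int (\<Sum>j\<in>V. cartan T i j * a j)"
    by (simp add: C_def d_def)
  then show ?thesis using null_vector[OF \<open>i \<in> V\<close>] by simp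
qed

lemma symmetrized_null_row: "i \<in> V \<Longrightarrow> (\<Sum>k\<in>V. \<eta> k * C i k * p k) = 0"
proof -
  assume i: "i \<in> V"
  have "(\<Sum>k\<in>V. \<eta> k * C i k * p k) = (\<Sum>k\<in>V. C i k * d k)"
  proof (rule sum.cong)
    fix k assume "k \<in> V"
    then show "\<eta> k * C i k * p k = C i k * d k"
      using symmetrizer_pos[of k] by (simp add: p_def)
  qed simp
  then show ?thesis using C_null_vector[OF i] by simp
qed

lemma symmetrized_null_column: "k \<in> V \<Longrightarrow> (\<Sum>i\<in>V. \<eta> k * C i k * p i) = 0"
proof -
  assume k: "k \<in> V"
  have "(\<Sum>i\<in>V. \<eta> k * C i k * p i) = (\<Sum>i\<in>V. C k i * d i)"
  proof (rule sum.cong)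
    fix i assume i: "i \<in> V"
    have "\<eta> k * C i k * p i = \<eta> i * C k i * (d i / \<eta> i)"
      using C_symmetrizable[OF i k] by (simp add: p_def)
    also have "\<dots> = C k i * d i" using symmetrizer_pos[OF i] by simp
    finally show "\<eta> k * C i k * p i = C k i * d i" .
  qed simp
  then show ?thesis using C_null_vector[OF k] by simp
qed

lemma config_of_p: "config_of p k = 0"
proof (cases "k \<in> V")
  case True
  have "\<eta> k * config_of p k = (\<Sum>i\<in>V. \<eta> k * C i k * p i)"
    by (simp add: config_of_def sum_distrib_left mult_ac)
  then show ?thesis using symmetrized_null_column[OF True] symmetrizer_pos[OF True] by simp
qed (simp add: config_of_def C_eq_0_outside)

lemma qform_double_sum: "qform x = (\<Sum>i\<in>V. \<Sum>k\<in>V. x i * (\<eta> k * C i k) * x k)"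
  unfolding qform_def config_of_def
  by (subst sum.swap) (simp add: sum_distrib_left sum_distrib_right mult_ac)

text \<open>Since \<open>p\<close> lies in the kernel of the symmetric matrix \<open>\<eta> k * C i k\<close>, the form is a sum of
  squares of differences of the ratios \<open>x i / p i\<close>, weighted by the nonnegative off-diagonal
  entries \<open>- \<eta> k * C i k\<close>.\<close>

lemma qform_eq_edge_sum:
  "qform x = -(1/2) * (\<Sum>i\<in>V. \<Sum>k\<in>V. \<eta> k * C i k * p i * p k * (x i / p i - x k / p k)\<^sup>2)"
proof -
  let ?G = "\<lambda>i k. \<eta> k * C i k"
  have expand: "?G i k * p i * p k * (x i / p i - x k / p k)\<^sup>2
      = (x i ^ 2 / p i) * (?G i k * p k) + (x k ^ 2 / p k) * (?G i k * p i) - 2 * (x i * ?G i k * x k)"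
    if "i \<in> V" "k \<in> V" for i k
    using p_pos[OF that(1)] p_pos[OF that(2)] by (simp add: power2_eq_square field_simps)
  have "(\<Sum>i\<in>V. \<Sum>k\<in>V. ?G i k * p i * p k * (x i / p i - x k / p k)\<^sup>2)
      = (\<Sum>i\<in>V. \<Sum>k\<in>V. (x i ^ 2 / p i) * (?G i k * p k))
        + (\<Sum>i\<in>V. \<Sum>k\<in>V. (x k ^ 2 / p k) * (?G i k * p i))
        - 2 * (\<Sum>i\<in>V. \<Sum>k\<in>V. x i * ?G i k * x k)"
    by (simp add: expand sum.distrib sum_subtractf sum_distrib_left)
  also have "(\<Sum>i\<in>V. \<Sum>k\<in>V. (x i ^ 2 / p i) * (?G i k * p k))
      = (\<Sum>i\<in>V. (x i ^ 2 / p i) * (\<Sum>k\<in>V. ?G i k * p k))"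
    by (simp add: sum_distrib_left)
  also have "(\<Sum>i\<in>V. \<Sum>k\<in>V. (x k ^ 2 / p k) * (?G i k * p i))
      = (\<Sum>k\<in>V. (x k ^ 2 / p k) * (\<Sum>i\<in>V. ?G i k * p i))"
    by (subst sum.swap) (simp add: sum_distrib_left)
  finally have "(\<Sum>i\<in>V. \<Sum>k\<in>V. ?G i k * p i * p k * (x i / p i - x k / p k)\<^sup>2) = - 2 * qform x"
    by (simp add: symmetrized_null_row symmetrized_null_column qform_double_sum)
  then show ?thesis by simp
qed

lemma edge_term_nonneg:
  "i \<in> V \<Longrightarrow> k \<in> V \<Longrightarrow> 0 \<le> - (\<eta> k * C i k * p i * p k * (x i / p i - x k / p k)\<^sup>2)"
proof (cases "i = k")
  case False
  assume "i \<in> V" "k \<in> V"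
  then have "\<eta> k * C i k * p i * p k \<le> 0"
    using C_offdiag_nonpos[OF False] symmetrizer_pos p_pos
    by (simp add: mult_nonneg_nonpos mult_nonpos_nonneg less_imp_le)
  then show ?thesis by (simp add: mult_nonpos_nonneg)
qed simp

lemma qform_nonneg: "0 \<le> qform x"
proof -
  have "0 \<le> (\<Sum>i\<in>V. \<Sum>k\<in>V. - (\<eta> k * C i k * p i * p k * (x i / p i - x k / p k)\<^sup>2))"
    by (intro sum_nonneg edge_term_nonneg)
  then show ?thesis by (simp add: qform_eq_edge_sum sum_negf)
qed

lemma ratio_diff_edge_bound:
  assumes i: "i \<in> V" and k: "k \<in> V" and "i \<noteq> k" and "C i k \<noteq> 0"
  shows "\<bar>x i / p i - x k / p k\<bar> \<le> sqrt (2 / - (\<eta> k * C i k * p i * p k)) * sqrt (qform x)"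
proof -
  let ?t = "\<lambda>i k. - (\<eta> k * C i k * p i * p k * (x i / p i - x k / p k)\<^sup>2)"
  let ?g = "- (\<eta> k * C i k * p i * p k)"
  have "?t i k \<le> (\<Sum>k'\<in>V. ?t i k')"
    by (rule member_le_sum) (use edge_term_nonneg i k in auto)
  also have "\<dots> \<le> (\<Sum>i'\<in>V. \<Sum>k'\<in>V. ?t i' k')"
    by (rule member_le_sum[where f = "\<lambda>i'. \<Sum>k'\<in>V. ?t i' k'"])
       (use edge_term_nonneg i in \<open>auto intro: sum_nonneg\<close>)
  also have "\<dots> = 2 * qform x" by (simp add: qform_eq_edge_sum sum_negf)
  finally have t: "?g * (x i / p i - x k / p k)\<^sup>2 \<le> 2 * qform x" by simp
  have "C i k < 0" using C_offdiag_nonpos[OF \<open>i \<noteq> k\<close>] \<open>C i k \<noteq> 0\<close> by simp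
  then have "?g > 0" using symmetrizer_pos[OF k] p_pos[OF i] p_pos[OF k]
    by (simp add: mult_pos_neg mult_neg_pos)
  with t have "(x i / p i - x k / p k)\<^sup>2 \<le> 2 / ?g * qform x" by (simp add: field_simps)
  then have "sqrt ((x i / p i - x k / p k)\<^sup>2) \<le> sqrt (2 / ?g * qform x)" by (rule real_sqrt_le_mono)
  then show ?thesis by (simp only: real_sqrt_abs real_sqrt_mult)
qed

lemma ratio_diff_vertex_bound:
  assumes "i \<in> V"
  shows "\<exists>K\<ge>0. \<forall>x. \<bar>x i / p i - x 0 / p 0\<bar> \<le> K * sqrt (qform x)"
  using connected[OF assms]
proof (induction rule: rtranclp_induct)
  case base
  show ?case by (intro exI[of _ 0]) auto
next
  case (step b k)
  then obtain K where K: "K \<ge> 0" "\<forall>x. \<bar>x b / p b - x 0 / p 0\<bar> \<le> K * sqrt (qform x)" by blast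
  from step.hyps(2) have b: "b \<in> V" and k: "k \<in> V" and "C b k \<noteq> 0" by (auto simp: C_def)
  show ?case
  proof (cases "b = k")
    case True
    then show ?thesis using K by blast
  next
    case False
    let ?K' = "sqrt (2 / - (\<eta> k * C b k * p b * p k))"
    have "\<bar>x k / p k - x 0 / p 0\<bar> \<le> (K + \<bar>?K'\<bar>) * sqrt (qform x)" for x
    proof -
      have "\<bar>x b / p b - x k / p k\<bar> \<le> \<bar>?K'\<bar> * sqrt (qform x)"
        by (rule order_trans[OF ratio_diff_edge_bound[OF b k False \<open>C b k \<noteq> 0\<close>]])
           (intro mult_right_mono; simp add: qform_nonneg)
      then show ?thesis using K(2)[rule_format, of x] by (simp add: distrib_right)
    qed
    moreover have "0 \<le> K + \<bar>?K'\<bar>" using K(1) by simp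
    ultimately show ?thesis by blast
  qed
qed

lemma ratio_diff_bound:
  obtains K where "K \<ge> 0" and "\<And>x i. i \<in> V \<Longrightarrow> \<bar>x i / p i - x 0 / p 0\<bar> \<le> K * sqrt (qform x)"
proof -
  have "\<forall>i\<in>V. \<exists>K\<ge>0. \<forall>x. \<bar>x i / p i - x 0 / p 0\<bar> \<le> K * sqrt (qform x)"
    using ratio_diff_vertex_bound by blast
  then obtain Kv where Kv: "\<forall>i\<in>V. Kv i \<ge> 0 \<and> (\<forall>x. \<bar>x i / p i - x 0 / p 0\<bar> \<le> Kv i * sqrt (qform x))"
    by metis
  show thesis
  proof (rule that)
    show "0 \<le> (\<Sum>i\<in>V. Kv i)" using Kv by (simp add: sum_nonneg)
    fix x i assume i: "i \<in> V"
    have "Kv i \<le> (\<Sum>i\<in>V. Kv i)" by (rule member_le_sum) (use Kv i in auto)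
    then have "Kv i * sqrt (qform x) \<le> (\<Sum>i\<in>V. Kv i) * sqrt (qform x)"
      by (rule mult_right_mono) (simp add: qform_nonneg)
    moreover have "\<bar>x i / p i - x 0 / p 0\<bar> \<le> Kv i * sqrt (qform x)" using Kv i by blast
    ultimately show "\<bar>x i / p i - x 0 / p 0\<bar> \<le> (\<Sum>i\<in>V. Kv i) * sqrt (qform x)" by linarith
  qed
qed

lemma qform_eq_0_imp_proportional:
  assumes "qform x = 0" and "i \<in> V"
  shows "x i / p i = x 0 / p 0"
proof -
  obtain K where K: "\<And>x i. i \<in> V \<Longrightarrow> \<bar>x i / p i - x 0 / p 0\<bar> \<le> K * sqrt (qform x)"
    using ratio_diff_bound by blast
  have "\<bar>x i / p i - x 0 / p 0\<bar> \<le> 0"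
    using K[OF assms(2), of x] assms(1) by simp
  then show ?thesis by (simp only: abs_le_zero_iff right_minus_eq)
qed

lemma config_of_eq_ratio_sum: "config_of x k = (\<Sum>i\<in>V. p i * (x i / p i - x 0 / p 0) * C i k)"
proof -
  have "config_of x k = config_of x k - x 0 / p 0 * config_of p k"
    by (simp add: config_of_p)
  also have "\<dots> = (\<Sum>i\<in>V. p i * (x i / p i - x 0 / p 0) * C i k)"
    unfolding config_of_def sum_distrib_left sum_subtractf[symmetric]
  proof (rule sum.cong)
    fix i assume "i \<in> V"
    then show "x i * C i k - x 0 / p 0 * (p i * C i k) = p i * (x i / p i - x 0 / p 0) * C i k"
      using p_pos[of i] by (simp add: field_simps)
  qed simp
  finally show ?thesis .
qed

lemma config_of_bound:
  obtains K where "K \<ge> 0" and "\<And>x k. k \<in> V \<Longrightarrow> \<bar>config_of x k\<bar> \<le> K * sqrt (qform x)"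
proof -
  obtain K where K: "K \<ge> 0" "\<And>x i. i \<in> V \<Longrightarrow> \<bar>x i / p i - x 0 / p 0\<bar> \<le> K * sqrt (qform x)"
    using ratio_diff_bound by blast
  define S where "S = (\<Sum>k\<in>V. \<Sum>i\<in>V. p i * \<bar>C i k\<bar>)"
  have S_nonneg: "0 \<le> (\<Sum>i\<in>V. p i * \<bar>C i k\<bar>)" for k
    using p_pos by (intro sum_nonneg) (simp add: less_imp_le)
  have "\<bar>config_of x k\<bar> \<le> K * S * sqrt (qform x)" if k: "k \<in> V" for x k
  proof -
    have "\<bar>config_of x k\<bar> \<le> (\<Sum>i\<in>V. \<bar>p i * (x i / p i - x 0 / p 0) * C i k\<bar>)"
      unfolding config_of_eq_ratio_sum[of x k] by (rule sum_abs)
    also have "\<dots> \<le> (\<Sum>i\<in>V. p i * \<bar>C i k\<bar> * (K * sqrt (qform x)))"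
    proof (rule sum_mono)
      fix i assume i: "i \<in> V"
      have "\<bar>p i * (x i / p i - x 0 / p 0) * C i k\<bar> = p i * \<bar>C i k\<bar> * \<bar>x i / p i - x 0 / p 0\<bar>"
        using p_pos[OF i] by (simp add: abs_mult)
      also have "\<dots> \<le> p i * \<bar>C i k\<bar> * (K * sqrt (qform x))"
        using K(2)[OF i, of x] p_pos[OF i] by (intro mult_left_mono) simp_all
      finally show "\<bar>p i * (x i / p i - x 0 / p 0) * C i k\<bar> \<le> p i * \<bar>C i k\<bar> * (K * sqrt (qform x))" .
    qed
    also have "\<dots> = (\<Sum>i\<in>V. p i * \<bar>C i k\<bar>) * (K * sqrt (qform x))"
      by (simp add: sum_distrib_right)
    also have "\<dots> \<le> S * (K * sqrt (qform x))"
      unfolding S_def using k S_nonneg K(1) qform_nonneg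
      by (intro mult_right_mono member_le_sum) simp_all
    finally show ?thesis by (simp add: mult_ac)
  qed
  moreover have "0 \<le> K * S" unfolding S_def using K(1) S_nonneg by (simp add: sum_nonneg)
  ultimately show thesis using that by blast
qed

lemma null_vector_unique:
  assumes y: "\<And>i. i \<in> V \<Longrightarrow> (\<Sum>j\<in>V. C i j * y j) = 0" and i: "i \<in> V"
  shows "y i = y 0 * d i"
proof -
  define x where "x j = y j / \<eta> j" for j
  have "config_of x k = 0" if k: "k \<in> V" for k
  proof -
    have "\<eta> k * config_of x k = (\<Sum>j\<in>V. C k j * y j)"
      unfolding config_of_def sum_distrib_left
    proof (rule sum.cong)
      fix j assume j: "j \<in> V"
      have "\<eta> k * (x j * C j k) = \<eta> k * C j k * y j / \<eta> j"
        by (simp add: x_def)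
      also have "\<dots> = \<eta> j * C k j * y j / \<eta> j"
        using C_symmetrizable[OF j k] by simp
      also have "\<dots> = C k j * y j" using symmetrizer_pos[OF j] by simp
      finally show "\<eta> k * (x j * C j k) = C k j * y j" .
    qed simp
    then show ?thesis using y[OF k] symmetrizer_pos[OF k] by simp
  qed
  then have "qform x = 0" by (simp add: qform_def)
  then have "x i / p i = x 0 / p 0" using i by (rule qform_eq_0_imp_proportional)
  moreover have "x i / p i = y i / d i" using symmetrizer_pos[OF i] by (simp add: x_def p_def)
  moreover have "x 0 / p 0 = y 0" using symmetrizer_pos[of 0] mark_zero by (simp add: x_def p_def d_def)
  ultimately show ?thesis using d_pos[OF i] by (simp add: field_simps)
qed

text \<open>A diagram automorphism permutes the null vector, which is unique up to scaling; comparing the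
  sums of the entries shows that the scaling factor, the mark at the image of the vertex 0, is 1.\<close>

lemma mark_extending:
  assumes "i \<in> extending T"
  shows "a i = 1"
proof -
  obtain \<sigma> where i: "i = \<sigma> 0" and bij: "bij_betw \<sigma> V V"
    and pres: "\<And>j k. j \<in> V \<Longrightarrow> k \<in> V \<Longrightarrow> cartan T (\<sigma> j) (\<sigma> k) = cartan T j k"
    using assms by (auto simp: extending_def diagram_aut_def)
  have \<sigma>_V: "\<sigma> j \<in> V" if "j \<in> V" for j using bij that by (auto simp: bij_betw_def)
  have kernel: "(\<Sum>j\<in>V. C k j * d (\<sigma> j)) = 0" if k: "k \<in> V" for k
  proof -
    have "(\<Sum>j\<in>V. C k j * d (\<sigma> j)) = (\<Sum>j\<in>V. C (\<sigma> k) (\<sigma> j) * d (\<sigma> j))"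
      by (intro sum.cong refl) (simp add: C_def pres k)
    also have "\<dots> = (\<Sum>j\<in>V. C (\<sigma> k) j * d j)"
      using sum.reindex_bij_betw[OF bij, of "\<lambda>j. C (\<sigma> k) j * d j"] by simp
    also have "\<dots> = 0" using C_null_vector \<sigma>_V k by simp
    finally show ?thesis .
  qed
  have scale: "d (\<sigma> j) = d (\<sigma> 0) * d j" if "j \<in> V" for j
    by (rule null_vector_unique[where y = "\<lambda>j. d (\<sigma> j)"]) (simp_all add: kernel that)
  have "(\<Sum>j\<in>V. d j) = (\<Sum>j\<in>V. d (\<sigma> j))"
    using sum.reindex_bij_betw[OF bij, of d] by simp
  also have "\<dots> = (\<Sum>j\<in>V. d (\<sigma> 0) * d j)"
    by (rule sum.cong[OF refl scale])
  also have "\<dots> = d (\<sigma> 0) * (\<Sum>j\<in>V. d j)"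
    by (simp add: sum_distrib_left)
  finally have sum_eq: "(\<Sum>j\<in>V. d j) = d (\<sigma> 0) * (\<Sum>j\<in>V. d j)" .
  have "V \<noteq> {}" using zero_in_vertices[of T] by blast
  then have "0 < (\<Sum>j\<in>V. d j)" using d_pos by (intro sum_pos) auto
  with sum_eq have "d (\<sigma> 0) = 1" by simp
  then show ?thesis by (simp add: i d_def)
qed

lemma delta_eq: "delta T = (\<lambda>i. if i \<in> V then a i else 0)"
  unfolding delta_def
proof (rule the_equality)
  show "(\<forall>i\<in>V. 0 \<le> (if i \<in> V then a i else 0)) \<and> (\<forall>i. i \<notin> V \<longrightarrow> (if i \<in> V then a i else 0) = 0)
    \<and> (\<forall>i\<in>extending T. (if i \<in> V then a i else 0) = 1)
    \<and> (\<forall>r\<in>roots T. cartan_form T r (\<lambda>i. if i \<in> V then a i else 0) = 0)"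
  proof (intro conjI ballI allI impI)
    fix i assume "i \<in> extending T"
    then show "(if i \<in> V then a i else 0) = 1"
      using mark_extending extending_subset_vertices by auto
  next
    fix r
    have "cartan_form T r (\<lambda>i. if i \<in> V then a i else 0) = (\<Sum>i\<in>V. r i * (\<Sum>j\<in>V. cartan T i j * a j))"
      unfolding cartan_form_def by (simp add: sum_distrib_left mult_ac)
    then show "cartan_form T r (\<lambda>i. if i \<in> V then a i else 0) = 0" by (simp add: null_vector)
  qed (use marks_pos in \<open>auto simp: less_imp_le\<close>)
next
  fix y assume y: "(\<forall>i\<in>V. 0 \<le> y i) \<and> (\<forall>i. i \<notin> V \<longrightarrow> y i = 0) \<and> (\<forall>i\<in>extending T. y i = 1)
    \<and> (\<forall>r\<in>roots T. cartan_form T r y = 0)"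
  have kernel: "(\<Sum>j\<in>V. C k j * of_int (y j)) = 0" if k: "k \<in> V" for k
    using y roots.simple[OF k] cartan_form_simple_root[OF k, of y]
    by (simp add: C_def flip: of_int_mult of_int_sum)
  have "real_of_int (y i) = real_of_int (y 0) * d i" if "i \<in> V" for i
    by (rule null_vector_unique[where y = "\<lambda>j. real_of_int (y j)"]) (simp_all add: kernel that)
  with y zero_in_extending show "y = (\<lambda>i. if i \<in> V then a i else 0)"
    by (auto simp: d_def fun_eq_iff)
qed

lemma delta_dot_eq: "delta_dot T v = (\<Sum>k\<in>V. d k * v k)"
  by (simp add: delta_dot_def delta_eq d_def)

lemma delta_dot_fire: "i \<in> V \<Longrightarrow> delta_dot T (fire T i v) = delta_dot T v"
proof -
  assume i: "i \<in> V"
  have "delta_dot T (fire T i v) = (\<Sum>k\<in>V. d k * v k - v i * (C i k * d k))"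
    unfolding delta_dot_eq fire_eq[OF i] by (intro sum.cong refl) (simp add: C_def algebra_simps)
  also have "\<dots> = delta_dot T v - v i * (\<Sum>k\<in>V. C i k * d k)"
    by (simp add: delta_dot_eq sum_subtractf sum_distrib_left)
  finally show ?thesis using C_null_vector[OF i] by simp
qed

lemma game_reach_delta_dot: "game_reach T v w \<Longrightarrow> delta_dot T w = delta_dot T v"
  by (induction rule: rtranclp_induct) (auto simp: legal_move_def delta_dot_fire)

lemma delta_dot_config_of: "delta_dot T (config_of x) = 0"
proof -
  have "delta_dot T (config_of x) = (\<Sum>i\<in>V. x i * (\<Sum>k\<in>V. C i k * d k))"
    unfolding delta_dot_eq config_of_def sum_distrib_left sum_distrib_right
    by (rule trans[OF sum.swap]) (simp add: mult_ac)
  then show ?thesis by (simp add: C_null_vector)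
qed

section \<open>Root coordinates and finiteness of orbits\<close>

lemma config_of_Ints: "(\<And>l. x l \<in> \<int>) \<Longrightarrow> config_of x k \<in> \<int>"
  unfolding config_of_def by (intro Ints_sum Ints_mult C_Ints) auto

lemma config_of_sum:
  "config_of (\<lambda>l. \<Sum>j\<in>V. c j * y j l) k = (\<Sum>j\<in>V. c j * config_of (y j) k)"
  unfolding config_of_def sum_distrib_left sum_distrib_right
  by (rule trans[OF sum.swap]) (simp add: mult_ac)

text \<open>\<open>root_refl i\<close> is the simple reflection \<open>x \<mapsto> x - \<langle>x, \<alpha>\<^sub>i\<rangle> \<alpha>\<^sub>i\<close> in root coordinates.\<close>

definition root_refl :: "nat \<Rightarrow> (nat \<Rightarrow> real) \<Rightarrow> nat \<Rightarrow> real" where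
  "root_refl i x = x(i := x i - config_of x i)"

definition root_act :: "nat list \<Rightarrow> (nat \<Rightarrow> real) \<Rightarrow> nat \<Rightarrow> real" where
  "root_act g x = foldr root_refl g x"

definition simple :: "nat \<Rightarrow> nat \<Rightarrow> real" where
  "simple j = (\<lambda>k. if k = j then 1 else 0)"

lemma root_act_Nil [simp]: "root_act [] x = x"
  and root_act_Cons [simp]: "root_act (i # g) x = root_refl i (root_act g x)"
  by (simp_all add: root_act_def)

lemma config_of_root_refl:
  assumes "i \<in> V"
  shows "config_of (root_refl i x) k = config_of x k - config_of x i * C i k"
proof -
  have "config_of (root_refl i x) k = (\<Sum>j\<in>V. x j * C j k - (if j = i then config_of x i * C i k else 0))"
    unfolding config_of_def root_refl_def by (intro sum.cong refl) (simp add: algebra_simps)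
  also have "\<dots> = config_of x k - config_of x i * C i k"
    using assms by (simp add: sum_subtractf config_of_def)
  finally show ?thesis .
qed

lemma weyl_act_config_of:
  assumes "set g \<subseteq> V" and v: "\<And>k. k \<in> V \<Longrightarrow> v k = config_of x k" and "k \<in> V"
  shows "weyl_act T g v k = config_of (root_act g x) k"
  using assms(1,3)
proof (induction g arbitrary: k)
  case (Cons i g)
  then show ?case
    by (simp add: fire_eq config_of_root_refl C_def mult.commute)
qed (simp add: v)

lemma root_act_linear:
  "set g \<subseteq> V \<Longrightarrow> k \<in> V \<Longrightarrow> root_act g x k = (\<Sum>j\<in>V. x j * root_act g (simple j) k)"
proof (induction g arbitrary: k)
  case Nil
  then show ?case by (simp add: simple_def if_distrib[of "\<lambda>z. _ * z"] cong: if_cong)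
next
  case (Cons i g)
  then have i: "i \<in> V" and IH: "\<And>k. k \<in> V \<Longrightarrow> root_act g x k = (\<Sum>j\<in>V. x j * root_act g (simple j) k)"
    by auto
  have "config_of (root_act g x) i = config_of (\<lambda>l. \<Sum>j\<in>V. x j * root_act g (simple j) l) i"
    unfolding config_of_def by (intro sum.cong refl) (simp add: IH)
  then have "config_of (root_act g x) i = (\<Sum>j\<in>V. x j * config_of (root_act g (simple j)) i)"
    by (simp add: config_of_sum)
  with Cons.prems(2) i IH show ?case
    by (simp add: root_refl_def right_diff_distrib sum_subtractf)
qed

lemma config_of_root_act_linear:
  assumes "set g \<subseteq> V"
  shows "config_of (root_act g x) k = (\<Sum>j\<in>V. x j * config_of (root_act g (simple j)) k)"
proof -
  have "config_of (root_act g x) k = config_of (\<lambda>l. \<Sum>j\<in>V. x j * root_act g (simple j) l) k"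
    unfolding config_of_def by (intro sum.cong refl) (simp add: root_act_linear[OF assms])
  then show ?thesis by (simp add: config_of_sum)
qed

lemma root_act_simple_Ints: "root_act g (simple j) l \<in> \<int>"
proof (induction g arbitrary: l)
  case Nil
  then show ?case by (simp add: simple_def)
next
  case (Cons i g)
  then show ?case by (simp add: root_refl_def config_of_Ints)
qed

lemma qform_root_refl:
  assumes i: "i \<in> V"
  shows "qform (root_refl i x) = qform x"
proof -
  let ?t = "config_of x i"
  have sym: "(\<Sum>k\<in>V. \<eta> k * C i k * x k) = \<eta> i * ?t"
    unfolding config_of_def sum_distrib_left
    by (intro sum.cong refl) (simp add: C_symmetrizable[OF i] mult_ac)
  have "qform (root_refl i x) = (\<Sum>k\<in>V. (\<eta> k * x k * config_of x k - ?t * (\<eta> k * C i k * x k))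
          - (if k = i then ?t * \<eta> k * (config_of x k - ?t * C i k) else 0))"
    unfolding qform_def config_of_root_refl[OF i]
    by (intro sum.cong refl) (auto simp: root_refl_def algebra_simps)
  also have "\<dots> = qform x - ?t * (\<Sum>k\<in>V. \<eta> k * C i k * x k) - ?t * \<eta> i * (?t - ?t * C i i)"
    using i by (simp add: sum_subtractf sum_distrib_left qform_def)
  finally show ?thesis using sym C_diag[OF i] by (simp add: algebra_simps)
qed

lemma qform_root_act: "set g \<subseteq> V \<Longrightarrow> qform (root_act g x) = qform x"
  by (induction g) (auto simp: qform_root_refl)

text \<open>The orbit is finite because the reflected simple roots have integral configurations
  bounded in terms of the invariant form.\<close>

lemma weyl_orbit_finite:
  assumes v: "\<And>k. k \<in> V \<Longrightarrow> v k = config_of x k"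
  shows "finite {weyl_act T g v | g. set g \<subseteq> V}"
proof -
  obtain K where K: "K \<ge> 0" "\<And>y k. k \<in> V \<Longrightarrow> \<bar>config_of y k\<bar> \<le> K * sqrt (qform y)"
    using config_of_bound by blast
  define M where "M = K * (\<Sum>j\<in>V. sqrt (qform (simple j)))"
  define Z where "Z = {z :: real. z \<in> \<int> \<and> \<bar>z\<bar> \<le> M}"
  define \<Phi> where "\<Phi> W = (\<lambda>k. if k \<in> V then (\<Sum>j\<in>V. x j * W j k) else v k)"
    for W :: "nat \<Rightarrow> nat \<Rightarrow> real"
  have entry: "config_of (root_act g (simple j)) k \<in> Z"
    if g: "set g \<subseteq> V" and j: "j \<in> V" and k: "k \<in> V" for g j k
  proof -
    have "\<bar>config_of (root_act g (simple j)) k\<bar> \<le> K * sqrt (qform (simple j))"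
      using K(2)[OF k, of "root_act g (simple j)"] qform_root_act[OF g] by simp
    also have "\<dots> \<le> M"
      unfolding M_def using j K(1) qform_nonneg
      by (intro mult_left_mono member_le_sum) auto
    finally show ?thesis
      by (simp add: Z_def config_of_Ints root_act_simple_Ints)
  qed
  have orbit: "{weyl_act T g v | g. set g \<subseteq> V} \<subseteq> \<Phi> ` (V \<rightarrow>\<^sub>E V \<rightarrow>\<^sub>E Z)"
  proof clarify
    fix g assume g: "set g \<subseteq> V"
    define W where "W = restrict (\<lambda>j. restrict (config_of (root_act g (simple j))) V) V"
    have "W \<in> V \<rightarrow>\<^sub>E V \<rightarrow>\<^sub>E Z" using entry[OF g] by (auto simp: W_def)
    moreover have "weyl_act T g v = \<Phi> W"
      using g by (auto simp: \<Phi>_def W_def weyl_act_config_of[OF g v]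
          config_of_root_act_linear[OF g, of x] weyl_act_outside)
    ultimately show "weyl_act T g v \<in> \<Phi> ` (V \<rightarrow>\<^sub>E V \<rightarrow>\<^sub>E Z)" by blast
  qed
  have "finite (V \<rightarrow>\<^sub>E V \<rightarrow>\<^sub>E Z)"
    unfolding Z_def by (intro finite_PiE finite_Ints_abs_le finite_vertices)
  then show ?thesis using orbit by (rule finite_surj)
qed

lemma config_of_vanishing_off_zero:
  assumes "x 0 = 0" and "\<And>k. k \<in> V \<Longrightarrow> k \<noteq> 0 \<Longrightarrow> config_of x k = 0" and "i \<in> V"
  shows "x i = 0"
proof -
  have "qform x = 0"
    unfolding qform_def by (rule sum.neutral) (use assms(1,2) in auto)
  then have "x i / p i = x 0 / p 0" using assms(3) by (rule qform_eq_0_imp_proportional)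
  then have "x i / p i = 0" using assms(1) by simp
  then show ?thesis using p_pos[OF assms(3)] by simp
qed

text \<open>Every configuration orthogonal to \<open>\<delta>\<close> comes from root coordinates: on the vertices
  other than 0 this is a square system, injective by the previous lemma, and the coordinate at 0
  is then forced by orthogonality to \<open>\<delta>\<close>.\<close>

lemma config_of_onto:
  assumes "delta_dot T v = 0"
  obtains x where "\<And>k. k \<in> V \<Longrightarrow> v k = config_of x k"
proof -
  define m where "m = rank T"
  define X where "X w = (\<lambda>j. if j \<in> V \<and> j \<noteq> 0 then w (j - 1) else 0)" for w :: "nat \<Rightarrow> real"
  have config_X: "config_of (X w) k = (\<Sum>s<m. C (Suc s) k * w s)" for w k
    unfolding config_of_def vertices_insert_Suc[of T]
    by (simp add: sum.reindex X_def m_def vertices_def mult.commute)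
  have "\<exists>w. \<forall>r<m. (\<Sum>s<m. C (Suc s) (Suc r) * w s) = v (Suc r)"
  proof (rule injective_square_system_solvable)
    fix w assume "\<And>r. r < m \<Longrightarrow> (\<Sum>s<m. C (Suc s) (Suc r) * w s) = 0"
    then have vanish: "config_of (X w) k = 0" if "k \<in> V" "k \<noteq> 0" for k
      using that by (cases k) (auto simp: config_X vertices_def m_def)
    have "X w (Suc s) = 0" if "s < m" for s
    proof (rule config_of_vanishing_off_zero[where x = "X w"])
      show "X w 0 = 0" by (simp add: X_def)
      show "Suc s \<in> V" using that by (simp add: vertices_def m_def)
    qed (fact vanish)
    then show "\<forall>s<m. w s = 0" by (simp add: X_def vertices_def m_def)
  qed
  then obtain w where w: "\<And>r. r < m \<Longrightarrow> config_of (X w) (Suc r) = v (Suc r)"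
    by (auto simp: config_X)
  have off_zero: "config_of (X w) k = v k" if "k \<in> V" "k \<noteq> 0" for k
    using that w by (cases k) (auto simp: vertices_def m_def)
  have "(\<Sum>k\<in>V - {0}. d k * (config_of (X w) k - v k)) = 0"
    by (rule sum.neutral) (simp add: off_zero)
  then have "d 0 * (config_of (X w) 0 - v 0) = (\<Sum>k\<in>V. d k * (config_of (X w) k - v k))"
    by (simp add: sum.remove[OF finite_vertices zero_in_vertices])
  also have "\<dots> = delta_dot T (config_of (X w)) - delta_dot T v"
    by (simp add: delta_dot_eq right_diff_distrib sum_subtractf)
  finally have at_zero: "config_of (X w) 0 = v 0"
    using assms delta_dot_config_of d_pos[of 0] by simp
  have "v k = config_of (X w) k" if "k \<in> V" for k
    using off_zero[OF that] at_zero by (cases "k = 0") auto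
  then show thesis by (rule that)
qed

section \<open>The reachable configurations form the orbit\<close>

text \<open>The counting argument: pair every negative amplitude of a configuration in S with the
  positive amplitude it becomes after firing. Orthogonality to \<open>\<delta>\<close> makes the total
  \<open>\<delta>\<close>-weighted positive and negative amplitudes over S equal, so this injection from
  negative to positive amplitudes is onto.\<close>

lemma positive_amplitude_from_legal_move:
  assumes fin: "finite S" and orth: "\<And>w. w \<in> S \<Longrightarrow> delta_dot T w = 0"
    and legal: "\<And>w j. w \<in> S \<Longrightarrow> j \<in> V \<Longrightarrow> w j < 0 \<Longrightarrow> fire T j w \<in> S"
    and "u \<in> S" and "i \<in> V" and "u i > 0"
  obtains w where "w \<in> S" and "u = fire T i w"
proof -
  define wt where "wt z = d (snd z) * \<bar>fst z (snd z)\<bar>" for z :: "(nat \<Rightarrow> real) \<times> nat"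
  define Pos where "Pos = {z \<in> S \<times> V. fst z (snd z) > 0}"
  define Neg where "Neg = {z \<in> S \<times> V. fst z (snd z) < 0}"
  define h :: "(nat \<Rightarrow> real) \<times> nat \<Rightarrow> (nat \<Rightarrow> real) \<times> nat"
    where "h = (\<lambda>z. (fire T (snd z) (fst z), snd z))"
  have fin_SV: "finite (S \<times> V)" using fin by simp
  have balance: "sum wt Pos = sum wt Neg"
  proof -
    have "0 = (\<Sum>w\<in>S. \<Sum>j\<in>V. d j * w j)" using orth by (simp add: delta_dot_eq)
    also have "\<dots> = (\<Sum>z\<in>S \<times> V. (if fst z (snd z) > 0 then wt z else 0)
                                   - (if fst z (snd z) < 0 then wt z else 0))"
      unfolding sum.cartesian_product by (intro sum.cong refl) (auto simp: wt_def)
    also have "\<dots> = sum wt Pos - sum wt Neg"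
      unfolding Pos_def Neg_def sum_subtractf by (simp add: sum.inter_filter[OF fin_SV])
    finally show ?thesis by simp
  qed
  have "inj_on h Neg"
    unfolding h_def by (rule inj_on_subset[OF inj_on_fire_pair]) (auto simp: Neg_def)
  then have "sum wt (h ` Neg) = sum (wt \<circ> h) Neg" by (rule sum.reindex)
  also have "\<dots> = sum wt Neg"
    by (intro sum.cong refl) (auto simp: wt_def h_def fire_same)
  also have "\<dots> = sum wt Pos"
    using balance by simp
  finally have sums: "sum wt (h ` Neg) = sum wt Pos" .
  have "h ` Neg = Pos"
  proof (rule subset_eq_if_sum_eq[OF _ _ sums])
    show "finite Pos" using fin_SV by (simp add: Pos_def)
    show "h ` Neg \<subseteq> Pos" using legal by (auto simp: h_def Pos_def Neg_def fire_same)
    show "0 < wt z" if "z \<in> Pos" for z using that by (auto simp: Pos_def wt_def d_pos)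
  qed
  with assms(4-6) have "(u, i) \<in> h ` Neg" by (auto simp: Pos_def)
  then obtain z where "z \<in> Neg" "(u, i) = h z" by blast
  then have "fst z \<in> S" "u = fire T i (fst z)" by (auto simp: h_def Neg_def)
  then show thesis by (rule that)
qed

lemma fire_closed_if_legal_closed:
  assumes "finite S" and "\<And>w. w \<in> S \<Longrightarrow> delta_dot T w = 0"
    and legal: "\<And>w j. w \<in> S \<Longrightarrow> j \<in> V \<Longrightarrow> w j < 0 \<Longrightarrow> fire T j w \<in> S"
    and u: "u \<in> S" and i: "i \<in> V"
  shows "fire T i u \<in> S"
proof -
  consider "u i < 0" | "u i = 0" | "u i > 0" by linarith
  then show ?thesis
  proof cases
    case 1
    then show ?thesis using legal u i by blast
  next
    case 2
    then have "fire T i u = u" by (simp add: fire_eq[OF i] fun_eq_iff)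
    then show ?thesis using u by simp
  next
    case 3
    with assms obtain w where "w \<in> S" "u = fire T i w"
      by (rule positive_amplitude_from_legal_move)
    then show ?thesis using fire_fire[OF i] by simp
  qed
qed

lemma game_reach_fire:
  assumes v: "delta_dot T v = 0" and u: "game_reach T v u" and i: "i \<in> V"
  shows "game_reach T v (fire T i u)"
proof -
  define S where "S = {w. game_reach T v w}"
  obtain x where x: "\<And>k. k \<in> V \<Longrightarrow> v k = config_of x k"
    using config_of_onto[OF v] by blast
  have "S \<subseteq> {weyl_act T g v | g. set g \<subseteq> V}"
  proof
    fix w assume "w \<in> S"
    then have "game_reach T v w" by (simp add: S_def)
    then obtain g where "set g \<subseteq> V" "w = weyl_act T g v" by (rule game_reach_imp_weyl_act)
    then show "w \<in> {weyl_act T g v | g. set g \<subseteq> V}" by blast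
  qed
  then have "finite S" using weyl_orbit_finite[OF x] by (rule finite_subset)
  then have "fire T i u \<in> S"
  proof (rule fire_closed_if_legal_closed)
    show "delta_dot T w = 0" if "w \<in> S" for w
      using that game_reach_delta_dot v by (simp add: S_def)
    show "fire T j w \<in> S" if "w \<in> S" "j \<in> V" "w j < 0" for w j
    proof -
      have "legal_move T w (fire T j w)" using that(2,3) by (auto simp: legal_move_def)
      with that(1) show ?thesis by (simp add: S_def)
    qed
  qed (use u i in \<open>simp_all add: S_def\<close>)
  then show ?thesis by (simp add: S_def)
qed

lemma game_reach_weyl_act:
  assumes "delta_dot T v = 0"
  shows "set g \<subseteq> V \<Longrightarrow> game_reach T v (weyl_act T g v)"
proof (induction g)
  case (Cons i g)
  then show ?case using game_reach_fire[OF assms] by simp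
qed simp

lemma game_reach_back:
  assumes "delta_dot T v = 0" and "game_reach T v w"
  shows "game_reach T w v"
proof -
  obtain g where g: "set g \<subseteq> V" "w = weyl_act T g v"
    using game_reach_imp_weyl_act[OF assms(2)] .
  have "delta_dot T w = 0" using game_reach_delta_dot[OF assms(2)] assms(1) by simp
  then have "game_reach T w (weyl_act T (rev g) w)" using g(1) by (intro game_reach_weyl_act) auto
  then show ?thesis using g by (simp add: weyl_act_rev)
qed

end

section \<open>The affine Dynkin diagrams\<close>

text \<open>Kac's dual labels (Table Aff 1). They, not the labels, form \<open>\<delta>\<close> here, because the Cartan
  matrix of the numbers game is the transpose of Kac's.\<close>

fun dual_labels :: "affine_type \<Rightarrow> nat \<Rightarrow> int" where
  "dual_labels (TA n) i = 1"
| "dual_labels (TB n) i = (if i \<le> 1 \<or> i = n then 1 else 2)"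
| "dual_labels (TC n) i = 1"
| "dual_labels (TD n) i = (if i \<le> 1 \<or> n - 1 \<le> i then 1 else 2)"
| "dual_labels TE6 i = [1, 1, 2, 2, 3, 2, 1] ! i"
| "dual_labels TE7 i = [1, 2, 2, 3, 4, 3, 2, 1] ! i"
| "dual_labels TE8 i = [1, 2, 3, 4, 6, 5, 4, 3, 2] ! i"
| "dual_labels TF4 i = [1, 2, 3, 2, 1] ! i"
| "dual_labels TG2 i = [1, 1, 2] ! i"

fun symmetrizer :: "affine_type \<Rightarrow> nat \<Rightarrow> real" where
  "symmetrizer (TB n) i = (if i = n then 1 else 2)"
| "symmetrizer (TC n) i = (if i = 0 \<or> i = n then 2 else 1)"
| "symmetrizer TF4 i = [2, 2, 2, 1, 1] ! i"
| "symmetrizer TG2 i = [3, 1, 3] ! i"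
| "symmetrizer _ i = 1"

lemma affine_gcmI:
  fixes depth :: "nat \<Rightarrow> nat"
  assumes "\<forall>i\<in>vertices T. 0 < \<eta> i \<and> 0 < a i"
    and "\<forall>i\<in>vertices T. \<forall>k\<in>vertices T.
           \<eta> k * of_int (cartan T i k) = \<eta> i * of_int (cartan T k i)"
    and "a 0 = 1"
    and "\<forall>i\<in>vertices T. (\<Sum>j\<in>vertices T. cartan T i j * a j) = 0"
    and "\<forall>i\<in>vertices T. i \<noteq> 0 \<longrightarrow>
           parent i \<in> vertices T \<and> cartan T (parent i) i \<noteq> 0 \<and> depth (parent i) < depth i"
  shows "affine_gcm T a \<eta>"
  using assms by unfold_locales (auto intro: connected_by_parent[where parent = parent and depth = depth])

lemmas cartan_table_simps = vertices_upt cartan_def kac_def simple_edge_def upt_conv_Cons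

lemma affine_gcm_TE6: "affine_gcm TE6 (dual_labels TE6) (symmetrizer TE6)"
  by (rule affine_gcmI[where parent = "nth [0, 3, 0, 4, 2, 4, 5]" and depth = "nth [0, 4, 1, 3, 2, 3, 4]"])
     (simp_all add: cartan_table_simps del: set_upt)

lemma affine_gcm_TE7: "affine_gcm TE7 (dual_labels TE7) (symmetrizer TE7)"
  by (rule affine_gcmI[where parent = "nth [0, 0, 4, 1, 3, 4, 5, 6]" and depth = "nth [0, 1, 4, 2, 3, 4, 5, 6]"])
     (simp_all add: cartan_table_simps del: set_upt)

lemma affine_gcm_TE8: "affine_gcm TE8 (dual_labels TE8) (symmetrizer TE8)"
  by (rule affine_gcmI[where parent = "nth [0, 3, 4, 4, 5, 6, 7, 8, 0]" and depth = "nth [0, 7, 6, 6, 5, 4, 3, 2, 1]"])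
     (simp_all add: cartan_table_simps del: set_upt)

lemma affine_gcm_TF4: "affine_gcm TF4 (dual_labels TF4) (symmetrizer TF4)"
  by (rule affine_gcmI[where parent = "\<lambda>i. i - 1" and depth = id])
     (simp_all add: cartan_table_simps del: set_upt)

lemma affine_gcm_TG2: "affine_gcm TG2 (dual_labels TG2) (symmetrizer TG2)"
  by (rule affine_gcmI[where parent = "nth [0, 2, 0]" and depth = "nth [0, 2, 1]"])
     (simp_all add: cartan_table_simps del: set_upt)

lemma kac_off_TA:
  "i \<le> n \<Longrightarrow> j \<le> n \<Longrightarrow> kac_off (TA n) j i =
   (if n = 1 then -2 else if j = (if i = n then 0 else Suc i) \<or> i = (if j = n then 0 else Suc j) then -1 else 0)"
  by (auto simp: mod_Suc)

lemma null_vector_TA: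
  assumes "2 \<le> n" and i: "i \<in> vertices (TA n)"
  shows "(\<Sum>j\<in>vertices (TA n). cartan (TA n) i j * dual_labels (TA n) j) = 0"
proof -
  define m where "m = n - 2"
  have n: "n = Suc (Suc m)" using assms(1) by (simp add: m_def)
  consider "i = 0" | "i = n" | "0 < i" "i < n" using i by (force simp: vertices_def)
  then show ?thesis
  proof cases
    case 1
    show ?thesis by (rule sum_eq_0_by_support[where B = "{0, 1, n}"])
      (use n 1 in \<open>auto simp: vertices_def cartan_def kac_def kac_off_TA simp del: kac_off.simps\<close>)
  next
    case 2
    show ?thesis by (rule sum_eq_0_by_support[where B = "{0, n - 1, n}"])
      (use n 2 in \<open>auto simp: vertices_def cartan_def kac_def kac_off_TA simp del: kac_off.simps\<close>)
  next
    case 3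
    then obtain l where l: "i = Suc l" using not0_implies_Suc by force
    show ?thesis by (rule sum_eq_0_by_support[where B = "{l, Suc l, Suc (Suc l)}"])
      (use n 3 l in \<open>auto simp: vertices_def cartan_def kac_def kac_off_TA simp del: kac_off.simps\<close>)
  qed
qed

lemma affine_gcm_TA:
  assumes "1 \<le> n"
  shows "affine_gcm (TA n) (dual_labels (TA n)) (symmetrizer (TA n))"
proof (cases "n = 1")
  case True
  show ?thesis unfolding True
    by (rule affine_gcmI[where parent = "\<lambda>i. i - 1" and depth = id])
       (simp_all add: cartan_table_simps del: set_upt)
next
  case False
  define m where "m = n - 2"
  have n: "n = Suc (Suc m)" using assms False by (simp add: m_def)
  show ?thesis
  proof (rule affine_gcmI[where parent = "\<lambda>i. i - 1" and depth = id],
      goal_cases positive symmetric mark_zero null parent)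
    case symmetric
    show ?case using n by (auto simp: vertices_def cartan_def kac_def)
  next
    case null
    have "2 \<le> n" using assms False by simp
    then show ?case by (blast intro: null_vector_TA)
  next
    case parent
    show ?case using n by (auto simp: vertices_def cartan_def kac_def kac_off_TA simp del: kac_off.simps)
  qed simp_all
qed

lemma null_vector_TB:
  assumes "4 \<le> n" and i: "i \<in> vertices (TB n)"
  shows "(\<Sum>j\<in>vertices (TB n). cartan (TB n) i j * dual_labels (TB n) j) = 0"
proof -
  define m where "m = n - 4"
  have n: "n = Suc (Suc (Suc (Suc m)))" using assms(1) by (simp add: m_def)
  consider "i = 0" | "i = 1" | "i = 2" | "i = n" | "i = n - 1" | "3 \<le> i" "i < n - 1"
    using i n by (force simp: vertices_def)
  then show ?thesis
  proof cases
    case 1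
    show ?thesis by (rule sum_eq_0_by_support[where B = "{0, 2}"])
      (use n 1 in \<open>auto simp: vertices_def cartan_def kac_def simple_edge_def\<close>)
  next
    case 2
    show ?thesis by (rule sum_eq_0_by_support[where B = "{1, 2}"])
      (use n 2 in \<open>auto simp: vertices_def cartan_def kac_def simple_edge_def\<close>)
  next
    case 3
    show ?thesis by (rule sum_eq_0_by_support[where B = "{0, 1, 2, 3}"])
      (use n 3 in \<open>auto simp: vertices_def cartan_def kac_def simple_edge_def\<close>)
  next
    case 4
    show ?thesis by (rule sum_eq_0_by_support[where B = "{n - 1, n}"])
      (use n 4 in \<open>auto simp: vertices_def cartan_def kac_def simple_edge_def\<close>)
  next
    case 5
    show ?thesis by (rule sum_eq_0_by_support[where B = "{n - 2, n - 1, n}"])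
      (use n 5 in \<open>auto simp: vertices_def cartan_def kac_def simple_edge_def\<close>)
  next
    case 6
    then obtain l where l: "i = Suc l" using not0_implies_Suc by force
    show ?thesis by (rule sum_eq_0_by_support[where B = "{l, Suc l, Suc (Suc l)}"])
      (use n 6 l in \<open>auto simp: vertices_def cartan_def kac_def simple_edge_def\<close>)
  qed
qed

lemma affine_gcm_TB:
  assumes "3 \<le> n"
  shows "affine_gcm (TB n) (dual_labels (TB n)) (symmetrizer (TB n))"
proof (cases "n = 3")
  case True
  show ?thesis unfolding True
    by (rule affine_gcmI[where parent = "nth [0, 2, 0, 2]" and depth = "nth [0, 2, 1, 2]"])
       (simp_all add: cartan_table_simps del: set_upt)
next
  case False
  define m where "m = n - 4"
  have n: "n = Suc (Suc (Suc (Suc m)))" using assms False by (simp add: m_def)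
  show ?thesis
  proof (rule affine_gcmI[where parent = "\<lambda>i. if i = 1 then 2 else if i = 2 then 0 else i - 1"
        and depth = "\<lambda>i. if i = 1 then n + 5 else i"],
      goal_cases positive symmetric mark_zero null parent)
    case symmetric
    show ?case using n by (auto simp: vertices_def cartan_def kac_def simple_edge_def)
  next
    case null
    have "4 \<le> n" using assms False by simp
    then show ?case by (blast intro: null_vector_TB)
  next
    case parent
    show ?case using n by (auto simp: vertices_def cartan_def kac_def simple_edge_def)
  qed simp_all
qed

lemma null_vector_TC:
  assumes "2 \<le> n" and i: "i \<in> vertices (TC n)"
  shows "(\<Sum>j\<in>vertices (TC n). cartan (TC n) i j * dual_labels (TC n) j) = 0"
proof -
  consider "i = 0" | "i = n" | "0 < i" "i < n" using i by (force simp: vertices_def)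
  then show ?thesis
  proof cases
    case 1
    show ?thesis by (rule sum_eq_0_by_support[where B = "{0, 1}"])
      (use assms(1) 1 in \<open>auto simp: vertices_def cartan_def kac_def simple_edge_def\<close>)
  next
    case 2
    show ?thesis by (rule sum_eq_0_by_support[where B = "{n - 1, n}"])
      (use assms(1) 2 in \<open>auto simp: vertices_def cartan_def kac_def simple_edge_def\<close>)
  next
    case 3
    then obtain l where l: "i = Suc l" using not0_implies_Suc by force
    show ?thesis by (rule sum_eq_0_by_support[where B = "{l, Suc l, Suc (Suc l)}"])
      (use assms(1) 3 l in \<open>auto simp: vertices_def cartan_def kac_def simple_edge_def\<close>)
  qed
qed

lemma affine_gcm_TC:
  assumes "2 \<le> n"
  shows "affine_gcm (TC n) (dual_labels (TC n)) (symmetrizer (TC n))"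
proof (rule affine_gcmI[where parent = "\<lambda>i. i - 1" and depth = id],
    goal_cases positive symmetric mark_zero null parent)
  case symmetric
  show ?case using assms by (auto simp: vertices_def cartan_def kac_def simple_edge_def)
next
  case null
  show ?case using assms by (blast intro: null_vector_TC)
next
  case parent
  show ?case using assms by (auto simp: vertices_def cartan_def kac_def simple_edge_def)
qed simp_all

lemma null_vector_TD:
  assumes "5 \<le> n" and i: "i \<in> vertices (TD n)"
  shows "(\<Sum>j\<in>vertices (TD n). cartan (TD n) i j * dual_labels (TD n) j) = 0"
proof -
  define m where "m = n - 5"
  have n: "n = Suc (Suc (Suc (Suc (Suc m))))" using assms(1) by (simp add: m_def)
  consider "i = 0" | "i = 1" | "i = 2" | "i = n" | "i = n - 1" | "i = n - 2" | "3 \<le> i" "i < n - 2"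
    using i n by (force simp: vertices_def)
  then show ?thesis
  proof cases
    case 1
    show ?thesis by (rule sum_eq_0_by_support[where B = "{0, 2}"])
      (use n 1 in \<open>auto simp: vertices_def cartan_def kac_def simple_edge_def\<close>)
  next
    case 2
    show ?thesis by (rule sum_eq_0_by_support[where B = "{1, 2}"])
      (use n 2 in \<open>auto simp: vertices_def cartan_def kac_def simple_edge_def\<close>)
  next
    case 3
    show ?thesis by (rule sum_eq_0_by_support[where B = "{0, 1, 2, 3}"])
      (use n 3 in \<open>auto simp: vertices_def cartan_def kac_def simple_edge_def\<close>)
  next
    case 4
    show ?thesis by (rule sum_eq_0_by_support[where B = "{n - 2, n}"])
      (use n 4 in \<open>auto simp: vertices_def cartan_def kac_def simple_edge_def\<close>)
  next
    case 5
    show ?thesis by (rule sum_eq_0_by_support[where B = "{n - 2, n - 1}"])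
      (use n 5 in \<open>auto simp: vertices_def cartan_def kac_def simple_edge_def\<close>)
  next
    case 6
    show ?thesis by (rule sum_eq_0_by_support[where B = "{n - 3, n - 2, n - 1, n}"])
      (use n 6 in \<open>auto simp: vertices_def cartan_def kac_def simple_edge_def\<close>)
  next
    case 7
    then obtain l where l: "i = Suc l" using not0_implies_Suc by force
    show ?thesis by (rule sum_eq_0_by_support[where B = "{l, Suc l, Suc (Suc l)}"])
      (use n 7 l in \<open>auto simp: vertices_def cartan_def kac_def simple_edge_def\<close>)
  qed
qed

lemma affine_gcm_TD:
  assumes "4 \<le> n"
  shows "affine_gcm (TD n) (dual_labels (TD n)) (symmetrizer (TD n))"
proof (cases "n = 4")
  case True
  show ?thesis unfolding True
    by (rule affine_gcmI[where parent = "nth [0, 2, 0, 2, 2]" and depth = "nth [0, 2, 1, 2, 2]"])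
       (simp_all add: cartan_table_simps del: set_upt)
next
  case False
  define m where "m = n - 5"
  have n: "n = Suc (Suc (Suc (Suc (Suc m))))" using assms False by (simp add: m_def)
  show ?thesis
  proof (rule affine_gcmI[where parent = "\<lambda>i. if i = 1 then 2 else if i = 2 then 0 else if i = n then n - 2 else i - 1"
        and depth = "\<lambda>i. if i = 1 then n + 5 else i"],
      goal_cases positive symmetric mark_zero null parent)
    case symmetric
    show ?case by (auto simp: cartan_def kac_def simple_edge_def)
  next
    case null
    have "5 \<le> n" using assms False by simp
    then show ?case by (blast intro: null_vector_TD)
  next
    case parent
    show ?case using n by (auto simp: vertices_def cartan_def kac_def simple_edge_def)
  qed simp_all
qed

lemma affine_gcm_dual_labels:
  "valid_type T \<Longrightarrow> affine_gcm T (dual_labels T) (symmetrizer T)"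
  by (cases T) (simp_all add: affine_gcm_TA affine_gcm_TB affine_gcm_TC affine_gcm_TD
      affine_gcm_TE6 affine_gcm_TE7 affine_gcm_TE8 affine_gcm_TF4 affine_gcm_TG2)

theorem theorem3p1:
  fixes T :: affine_type and v :: "nat \<Rightarrow> real"
  assumes "valid_type T"
    and "delta_dot T v = 0"
  shows "(\<forall>g \<in> lists (vertices T). game_reach T v (weyl_act T g v))
         \<and> (\<forall>w. game_reach T v w \<longrightarrow> game_reach T w v)"
proof -
  interpret affine_gcm T "dual_labels T" "symmetrizer T"
    using affine_gcm_dual_labels[OF assms(1)] .
  show ?thesis
  proof (intro conjI ballI allI impI)
    fix g assume "g \<in> lists (vertices T)"
    then show "game_reach T v (weyl_act T g v)"
      using assms(2) by (intro game_reach_weyl_act) auto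
  next
    fix w assume "game_reach T v w"
    with assms(2) show "game_reach T w v" by (rule game_reach_back)
  qed
qed

end
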